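(* Let $n\ge1$, $\alpha\in[0,n)$, and let $\phi(x)=\Phi(|x|)$ be a radial function on $\mathbb{R}^n$, where $\Phi:[0,\infty)\to[0,\infty)$ is decreasing, bounded and compactly supported. Then for every finite positive Borel measure $V$ on $\mathbb{R}^n$ and every fixed $\rho>0$, $$\lim_{t\to0^+}\Big\|\mathcal{M}^{\alpha}_{\phi}(V_t)(\cdot)-\sup_{r>0}\phi^{\alpha}_r(\cdot)\,V(\mathbb{R}^n)\Big\|_{L^{\frac{n}{n-\alpha},\infty}(\mathbb{R}^n\setminus B(0,\rho))}=0.$$
   Context: For $r>0$, $\phi^{\alpha}_r(x)=r^{-(n-\alpha)}\phi(x/r)$. For a positive measure $\mu$, $\mathcal{M}^{\alpha}_{\phi}(\mu)(x)=\sup_{r>0}\frac{1}{r^{n-\alpha}}\int_{\mathbb{R}^n}\phi\big(\frac{x-y}{r}\big)\,d\mu(y)$. For a measure $V$ and $t>0$, $V_t(E)=V(E/t)$ with $E/t=\{x/t:x\in E\}$. For a measurable set $E$ and $0<p<\infty$, $\|f\|_{L^{p,\infty}(E)}=\sup_{\lambda>0}\lambda\,|\{x\in E:|f(x)|>\lambda\}|^{1/p}$ (Lebesgue measure). *)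

theory Defs
  imports "HOL-Analysis.Analysis"
begin

definition dil_kernel :: "('a::euclidean_space \<Rightarrow> real) \<Rightarrow> real \<Rightarrow> real \<Rightarrow> 'a \<Rightarrow> real" where
  "dil_kernel \<phi> \<alpha> r x = r powr (-(real DIM('a) - \<alpha>)) * \<phi> ((1 / r) *\<^sub>R x)"

definition frac_max :: "real \<Rightarrow> ('a::euclidean_space \<Rightarrow> real) \<Rightarrow> 'a measure \<Rightarrow> 'a \<Rightarrow> ereal" where
  "frac_max \<alpha> \<phi> \<mu> x =
     (SUP r\<in>{0<..}. enn2ereal (ennreal (1 / r powr (real DIM('a) - \<alpha>)) *
        (\<integral>\<^sup>+ y. ennreal (\<phi> ((1 / r) *\<^sub>R (x - y))) \<partial>\<mu>)))"

text \<open>Dilation of a measure: V_t(E) = V(E/t), i.e. the push-forward under y \<mapsto> t y.\<close>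
definition dilate_measure :: "real \<Rightarrow> 'a::euclidean_space measure \<Rightarrow> 'a measure" where
  "dilate_measure t V = distr V borel (\<lambda>y. t *\<^sub>R y)"

definition enn_powr :: "ennreal \<Rightarrow> real \<Rightarrow> ennreal" where
  "enn_powr x p = (if x = top then top else ennreal (enn2real x powr p))"

definition weak_Lp_norm :: "real \<Rightarrow> 'a::euclidean_space set \<Rightarrow> ('a \<Rightarrow> ereal) \<Rightarrow> ennreal" where
  "weak_Lp_norm p E f =
     (SUP l\<in>{0<..}. ennreal l * enn_powr (emeasure lebesgue {x \<in> E. \<bar>f x\<bar> > ereal l}) (1 / p))"

end

theory Submission
  imports Defs
begin

text \<open>
  Write \<open>\<beta> = n - \<alpha>\<close> and \<open>c = sup (s > 0) s^\<beta> \<Phi>(s)\<close>; substituting \<open>s = |x|/r\<close> gives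
  \<open>sup (r > 0) \<phi>^\<alpha>_r(x) = c |x|^-\<beta>\<close>. Fix \<open>K\<close> and let \<open>m\<close> be the mass of \<open>V\<close> outside \<open>B(0,K)\<close>.
  For \<open>|x| \<ge> \<rho>\<close> and \<open>tK \<le> \<rho>/2\<close>, the mass of \<open>V_t\<close> inside \<open>B(0,tK)\<close> puts \<open>M^\<alpha>_\<phi>(V_t)(x)\<close>
  between \<open>c (|x| + tK)^-\<beta> (V(R^n) - m)\<close> and \<open>c (|x| - tK)^-\<beta> V(R^n)\<close>, up to the contribution
  of the far mass, which is bounded by the uncentred fractional maximal function of a measure of
  total mass \<open>m\<close>. So the deviation is at most \<open>\<kappa>_t |x|^-\<beta>\<close> plus that maximal function, with
  \<open>\<kappa>_t \<longrightarrow> c m\<close> as \<open>t \<longrightarrow> 0\<close>. As \<open>|x|^-\<beta>\<close> lies in weak \<open>L^(n/\<beta>)\<close> and the Vitali covering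
  lemma gives the weak-type bound \<open>O(m)\<close> for the maximal function, the weak norm is eventually
  \<open>O(m)\<close>; finally let \<open>K \<longrightarrow> \<infinity>\<close>.
\<close>

lemma emeasure_lebesgue_ball_le:
  fixes x :: "'a::euclidean_space"
  assumes R: "0 \<le> R"
  shows "emeasure lebesgue (ball x R) \<le> ennreal ((2 * R) ^ DIM('a))"
proof -
  have sub: "ball x R \<subseteq> cbox (x - R *\<^sub>R One) (x + R *\<^sub>R One)"
  proof
    fix y assume "y \<in> ball x R"
    then have d: "norm (y - x) < R" by (simp add: dist_norm norm_minus_commute)
    show "y \<in> cbox (x - R *\<^sub>R One) (x + R *\<^sub>R One)"
      unfolding mem_box(2)
    proof
      fix b :: 'a assume b: "b \<in> Basis"
      have "\<bar>(y - x) \<bullet> b\<bar> \<le> norm (y - x)" using b by (rule Basis_le_norm)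
      with d b show "(x - R *\<^sub>R One) \<bullet> b \<le> y \<bullet> b \<and> y \<bullet> b \<le> (x + R *\<^sub>R One) \<bullet> b"
        by (auto simp: inner_simps abs_le_iff)
    qed
  qed
  have "emeasure lebesgue (ball x R) \<le> emeasure lborel (cbox (x - R *\<^sub>R One) (x + R *\<^sub>R One))"
    using emeasure_mono[OF sub] by simp
  also have "\<dots> = (\<Prod>b\<in>(Basis::'a set). ennreal (2 * R))"
    using R by (simp add: emeasure_lborel_cbox_eq inner_simps algebra_simps ennreal_power power_mult_distrib)
  also have "\<dots> = ennreal ((2 * R) ^ DIM('a))"
    using R by (subst ennreal_power[symmetric]) auto
  finally show ?thesis .
qed

lemma emeasure_UN_countable_le:
  assumes sets: "\<And>i. i \<in> I \<Longrightarrow> X i \<in> sets M" and I: "countable I"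
  shows "emeasure M (\<Union>(X ` I)) \<le> (\<integral>\<^sup>+ i. emeasure M (X i) \<partial>count_space I)"
proof -
  have "indicator (\<Union>(X ` I)) x \<le> (\<integral>\<^sup>+ i. indicator (X i) x \<partial>count_space I :: ennreal)" for x
  proof (cases "x \<in> \<Union>(X ` I)")
    case True
    then obtain j where j: "x \<in> X j" "j \<in> I" by auto
    have "(1::ennreal) = (\<integral>\<^sup>+ i. indicator {j} i \<partial>count_space I)"
      using j by (simp add: nn_integral_count_space_indicator nn_integral_indicator_singleton)
    also have "\<dots> \<le> (\<integral>\<^sup>+ i. indicator (X i) x \<partial>count_space I)"
      by (rule nn_integral_mono) (use j in \<open>auto split: split_indicator\<close>)
    finally show ?thesis using True by simp
  qed simp
  then have "emeasure M (\<Union>(X ` I)) \<le> (\<integral>\<^sup>+ x. \<integral>\<^sup>+ i. indicator (X i) x \<partial>count_space I \<partial>M)"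
    using sets I by (subst nn_integral_indicator[symmetric]) (auto intro: sets.countable_UN' nn_integral_mono)
  also have "\<dots> = (\<integral>\<^sup>+ i. \<integral>\<^sup>+ x. indicator (X i) x \<partial>M \<partial>count_space I)"
    using sets I by (intro nn_integral_count_space_nn_integral) auto
  also have "\<dots> = (\<integral>\<^sup>+ i. emeasure M (X i) \<partial>count_space I)"
    using sets by (intro nn_integral_cong) auto
  finally show ?thesis .
qed

lemma emeasure_lebesgue_ball_5_le:
  fixes x :: "'a::euclidean_space"
  assumes r: "0 < r" "r \<le> B" and L: "0 < L" and \<beta>: "0 < \<beta>" "\<beta> \<le> real DIM('a)"
    and mass: "ennreal (L * r powr \<beta>) < \<mu>"
  shows "emeasure lebesgue (ball x (5 * r)) \<le> ennreal (10 ^ DIM('a) * B powr (real DIM('a) - \<beta>) / L) * \<mu>"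
proof -
  define \<kappa> where "\<kappa> = 10 ^ DIM('a) * B powr (real DIM('a) - \<beta>) / L"
  have "(2 * (5 * r)) ^ DIM('a) = 10 ^ DIM('a) * (r powr \<beta> * r powr (real DIM('a) - \<beta>))"
    using r by (simp add: powr_realpow power_mult_distrib flip: powr_add)
  also have "\<dots> \<le> 10 ^ DIM('a) * (r powr \<beta> * B powr (real DIM('a) - \<beta>))"
    using r \<beta> by (intro mult_left_mono powr_mono2) auto
  also have "\<dots> = \<kappa> * (L * r powr \<beta>)"
    using L by (simp add: \<kappa>_def field_simps)
  finally have "emeasure lebesgue (ball x (5 * r)) \<le> ennreal (\<kappa> * (L * r powr \<beta>))"
    using emeasure_lebesgue_ball_le[of "5 * r" x] r by (meson ennreal_leI less_imp_le order_trans mult_nonneg_nonneg zero_le_numeral)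
  also have "\<dots> = ennreal \<kappa> * ennreal (L * r powr \<beta>)"
    using L by (intro ennreal_mult) (auto simp: \<kappa>_def)
  also have "\<dots> \<le> ennreal \<kappa> * \<mu>"
    using mass by (intro mult_left_mono) auto
  finally show ?thesis by (simp add: \<kappa>_def)
qed

lemma emeasure_UN_balls_5_le:
  fixes c :: "'i \<Rightarrow> 'a::euclidean_space"
  assumes C: "countable C" and rad: "\<And>i. i \<in> C \<Longrightarrow> 0 < rad i \<and> rad i \<le> B"
    and L: "0 < L" and \<beta>: "0 < \<beta>" "\<beta> \<le> real DIM('a)"
    and P: "\<And>i. i \<in> C \<Longrightarrow> P i \<in> sets N" and disj: "disjoint_family_on P C"
    and mass: "\<And>i. i \<in> C \<Longrightarrow> ennreal (L * rad i powr \<beta>) < emeasure N (P i)"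
  shows "emeasure lebesgue (\<Union>i\<in>C. ball (c i) (5 * rad i))
    \<le> ennreal (10 ^ DIM('a) * B powr (real DIM('a) - \<beta>) / L) * emeasure N (\<Union>i\<in>C. P i)"
proof -
  have "emeasure lebesgue (\<Union>i\<in>C. ball (c i) (5 * rad i))
      \<le> (\<integral>\<^sup>+ i. emeasure lebesgue (ball (c i) (5 * rad i)) \<partial>count_space C)"
    using C by (intro emeasure_UN_countable_le) auto
  also have "\<dots> \<le> (\<integral>\<^sup>+ i. ennreal (10 ^ DIM('a) * B powr (real DIM('a) - \<beta>) / L) * emeasure N (P i) \<partial>count_space C)"
    using rad mass by (intro nn_integral_mono emeasure_lebesgue_ball_5_le[OF _ _ L \<beta>]) auto
  also have "\<dots> = ennreal (10 ^ DIM('a) * B powr (real DIM('a) - \<beta>) / L) * emeasure N (\<Union>i\<in>C. P i)"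
    using C P disj by (simp add: nn_integral_cmult emeasure_UN_countable)
  finally show ?thesis .
qed

lemma powr_inverse_powr_mult:
  fixes q \<beta> n :: real
  assumes "0 \<le> q" "0 < \<beta>"
  shows "(q powr (1 / \<beta>)) powr (n - \<beta>) * q = q powr (n / \<beta>)"
proof -
  have "(q powr (1 / \<beta>)) powr (n - \<beta>) * q = q powr ((n - \<beta>) / \<beta> + 1)"
    using assms by (simp add: powr_powr powr_add)
  also have "(n - \<beta>) / \<beta> + 1 = n / \<beta>"
    using assms by (simp add: field_simps)
  finally show ?thesis .
qed

lemma radius_le_of_mass:
  fixes r m L \<beta> :: real
  assumes mass: "ennreal (L * r powr \<beta>) < ennreal m" and L: "0 < L" and \<beta>: "0 < \<beta>" and r: "0 < r"
  shows "r \<le> (m / L) powr (1 / \<beta>)"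
proof -
  have "r powr \<beta> \<le> m / L" using mass L by (simp add: ennreal_less_iff field_simps)
  then have "(r powr \<beta>) powr (1 / \<beta>) \<le> (m / L) powr (1 / \<beta>)"
    using \<beta> by (intro powr_mono2) auto
  then show ?thesis using \<beta> r by (simp add: powr_powr)
qed

text \<open>The weak-type estimate for the uncentred maximal function of the push-forward of \<open>N\<close> restricted to \<open>T\<close>.\<close>
lemma Vitali_weak_type_bound:
  fixes g :: "'b \<Rightarrow> 'a::euclidean_space"
  assumes N: "finite_measure N" and g: "g \<in> borel_measurable N" and T: "T \<in> sets N"
    and L: "0 < L" and \<beta>: "0 < \<beta>" "\<beta> \<le> real DIM('a)"
  obtains U where "U \<in> sets lebesgue"
    and "{x. \<exists>r>0. ennreal (L * r powr \<beta>) < emeasure N {y\<in>T. g y \<in> ball x r}} \<subseteq> U"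
    and "emeasure lebesgue U \<le> ennreal (10 ^ DIM('a) * (measure N T / L) powr (real DIM('a) / \<beta>))"
proof -
  interpret finite_measure N by (rule N)
  define P where "P x r = {y\<in>T. g y \<in> ball x r}" for x r
  define m where "m = measure N T"
  define B where "B = (m / L) powr (1 / \<beta>)"
  have P_sets: "P x r \<in> sets N" for x r
  proof -
    have "P x r = T \<inter> (g -` ball x r \<inter> space N)"
      using sets.sets_into_space[OF T] by (auto simp: P_def)
    then show ?thesis using T measurable_sets[OF g, of "ball x r"] by auto
  qed
  have P_le: "emeasure N (\<Union>i\<in>I. P i (r i)) \<le> ennreal m" for I r
    using T by (auto simp: P_def m_def emeasure_eq_measure[symmetric] intro!: emeasure_mono)
  define S where "S = {x. \<exists>r>0. ennreal (L * r powr \<beta>) < emeasure N (P x r)}"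
  have "\<forall>x\<in>S. \<exists>r. 0 < r \<and> ennreal (L * r powr \<beta>) < emeasure N (P x r)"
    by (auto simp: S_def)
  then obtain rad where rad: "\<And>x. x \<in> S \<Longrightarrow> 0 < rad x \<and> ennreal (L * rad x powr \<beta>) < emeasure N (P x (rad x))"
    by metis
  \<comment> \<open>Radii are bounded because a ball can carry at most the total mass \<open>m\<close>.\<close>
  have rad_le: "rad x \<le> B" if x: "x \<in> S" for x
    unfolding B_def using rad[OF x] P_le[where I="{x}" and r="\<lambda>_. rad x"] L \<beta>
    by (intro radius_le_of_mass) auto
  obtain C where C: "countable C" "C \<subseteq> S"
    and disj: "pairwise (\<lambda>i j. disjnt (ball (id i) (rad i)) (ball (id j) (rad j))) C"
    and cover: "S \<subseteq> (\<Union>i\<in>C. ball (id i) (5 * rad i))"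
  proof (rule Vitali_covering_lemma_balls[where S=S and K=S and a=id and r=rad and B=B])
    show "S \<subseteq> (\<Union>i\<in>S. ball (id i) (rad i))" using rad by force
  qed (use rad rad_le in auto)
  define U where "U = (\<Union>i\<in>C. ball i (5 * rad i))"
  define \<kappa> where "\<kappa> = 10 ^ DIM('a) * B powr (real DIM('a) - \<beta>) / L"
  have "disjoint_family_on (\<lambda>i. P i (rad i)) C"
    using disj by (fastforce simp: disjoint_family_on_def pairwise_def disjnt_def P_def)
  then have "emeasure lebesgue U \<le> ennreal \<kappa> * emeasure N (\<Union>i\<in>C. P i (rad i))"
    unfolding U_def \<kappa>_def using C rad rad_le P_sets
    by (intro emeasure_UN_balls_5_le[where c=id, simplified, OF _ _ L \<beta>]) auto
  also have "\<dots> \<le> ennreal \<kappa> * ennreal m"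
    using P_le by (intro mult_left_mono) auto
  also have "\<dots> = ennreal (\<kappa> * m)"
    using L by (intro ennreal_mult[symmetric]) (auto simp: \<kappa>_def m_def)
  also have "\<kappa> * m = 10 ^ DIM('a) * (B powr (real DIM('a) - \<beta>) * (m / L))"
    by (simp add: \<kappa>_def)
  also have "B powr (real DIM('a) - \<beta>) * (m / L) = (m / L) powr (real DIM('a) / \<beta>)"
    unfolding B_def using L \<beta> by (intro powr_inverse_powr_mult) (auto simp: m_def)
  finally have "emeasure lebesgue U \<le> ennreal (10 ^ DIM('a) * (measure N T / L) powr (real DIM('a) / \<beta>))"
    by (simp add: m_def)
  moreover have "U \<in> sets lebesgue"
    unfolding U_def using C(1) by (intro sets.countable_UN') auto
  ultimately show ?thesis
    using that cover unfolding S_def P_def U_def by simp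
qed

lemma weak_Lp_norm_le:
  fixes f :: "'a::euclidean_space \<Rightarrow> ereal"
  assumes p: "0 < p" and A: "0 \<le> A"
    and level: "\<And>l. 0 < l \<Longrightarrow> emeasure lebesgue {x \<in> E. \<bar>f x\<bar> > ereal l} \<le> ennreal (A / l powr p)"
  shows "weak_Lp_norm p E f \<le> ennreal (A powr (1 / p))"
  unfolding weak_Lp_norm_def
proof (rule SUP_least)
  fix l :: real assume "l \<in> {0<..}"
  then have l: "0 < l" by simp
  define X where "X = emeasure lebesgue {x \<in> E. \<bar>f x\<bar> > ereal l}"
  have X_le: "X \<le> ennreal (A / l powr p)" unfolding X_def by (rule level[OF l])
  then have X_fin: "X \<noteq> top" by (metis ennreal_neq_top neq_top_trans)
  have "enn2real X \<le> A / l powr p"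
    using enn2real_mono[OF X_le] A by simp
  note X = X_fin this
  have "enn2real X powr (1 / p) \<le> (A / l powr p) powr (1 / p)"
    using p by (intro powr_mono2 X) auto
  also have "\<dots> = A powr (1 / p) / l"
    using l p by (simp add: powr_divide powr_powr)
  finally have "l * enn2real X powr (1 / p) \<le> A powr (1 / p)"
    using l by (simp add: field_simps)
  then have "ennreal (l * enn2real X powr (1 / p)) \<le> ennreal (A powr (1 / p))"
    by (rule ennreal_leI)
  then show "ennreal l * enn_powr X (1 / p) \<le> ennreal (A powr (1 / p))"
    using X(1) l by (simp add: enn_powr_def ennreal_mult)
qed

lemma tendsto_ennreal_0I:
  fixes f :: "'a \<Rightarrow> ennreal"
  assumes "\<And>\<epsilon>. 0 < \<epsilon> \<Longrightarrow> eventually (\<lambda>x. f x < ennreal \<epsilon>) F"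
  shows "(f \<longlongrightarrow> 0) F"
proof (rule order_tendstoI)
  fix y :: ennreal assume "0 < y"
  then obtain z where z: "0 < z" "z < y" using dense by blast
  then have "z < top" using top.not_eq_extremum by fastforce
  then obtain \<epsilon> where "0 < \<epsilon>" "z = ennreal \<epsilon>"
    using z(1) by (intro that[of "enn2real z"]) (auto simp: enn2real_positive_iff)
  then show "eventually (\<lambda>x. f x < y) F"
    using assms[of \<epsilon>] z(2) by (auto elim: eventually_mono)
qed simp

lemma enn2ereal_le_ereal: "x \<le> ennreal b \<Longrightarrow> 0 \<le> b \<Longrightarrow> enn2ereal x \<le> ereal b"
  by (metis enn2ereal_ennreal less_eq_ennreal.rep_eq)

lemma ereal_le_enn2ereal: "ennreal b \<le> x \<Longrightarrow> 0 \<le> b \<Longrightarrow> ereal b \<le> enn2ereal x"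
  by (metis enn2ereal_ennreal less_eq_ennreal.rep_eq)

lemma measure_norm_gt_LIMSEQ_0:
  fixes M :: "'a::real_normed_vector measure"
  assumes "finite_measure M" and "sets M = sets borel"
  shows "(\<lambda>k. measure M {y. real k < norm y}) \<longlonglongrightarrow> 0"
proof -
  interpret finite_measure M by (rule assms(1))
  have sets: "{y. real k < norm y} \<in> sets M" for k
    unfolding assms(2) by measurable
  have "decseq (\<lambda>k. {y::'a. real k < norm y})"
    by (rule decseq_SucI) auto
  then have "(\<lambda>k. measure M {y. real k < norm y}) \<longlonglongrightarrow> measure M (\<Inter>k. {y. real k < norm y})"
    using sets by (intro finite_Lim_measure_decseq) auto
  moreover have "(\<Inter>k. {y. real k < norm y}) = ({} :: 'a set)"
  proof -
    have "y \<notin> (\<Inter>k. {y. real k < norm y})" for y :: 'a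
    proof -
      obtain k where "norm y \<le> real k" using real_arch_simple by blast
      then have "y \<notin> {y. real k < norm y}" by simp
      then show ?thesis by blast
    qed
    then show ?thesis by blast
  qed
  ultimately show ?thesis by simp
qed

text \<open>The relative error made in replacing \<open>(u \<mp> a) powr -\<beta>\<close> by \<open>u powr -\<beta>\<close>, uniformly for \<open>u \<ge> \<rho>\<close>.\<close>
definition near_defect :: "real \<Rightarrow> real \<Rightarrow> real \<Rightarrow> real" where
  "near_defect \<beta> \<rho> a = (1 - a / \<rho>) powr -\<beta> - (1 + a / \<rho>) powr -\<beta>"

lemma powr_neg_shift_bounds:
  fixes u a \<rho> \<beta> :: real
  assumes \<beta>: "0 < \<beta>" and \<rho>: "0 < \<rho>" "\<rho> \<le> u" and a: "0 \<le> a" "a < \<rho>"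
  shows "(u - a) powr -\<beta> \<le> u powr -\<beta> * (1 - a / \<rho>) powr -\<beta>"
    and "u powr -\<beta> * (1 + a / \<rho>) powr -\<beta> \<le> (u + a) powr -\<beta>"
    and "(1 + a / \<rho>) powr -\<beta> \<le> 1" and "1 \<le> (1 - a / \<rho>) powr -\<beta>"
proof -
  have u: "0 < u" using \<rho> by linarith
  have ratio: "0 \<le> a / u" "a / u \<le> a / \<rho>" "a / \<rho> < 1"
    using a \<rho> u by (auto simp: divide_left_mono)
  have "(u - a) powr -\<beta> = u powr -\<beta> * (1 - a / u) powr -\<beta>"
    using u ratio by (simp add: powr_mult[symmetric] right_diff_distrib)
  also have "\<dots> \<le> u powr -\<beta> * (1 - a / \<rho>) powr -\<beta>"
    using \<beta> ratio by (intro mult_left_mono powr_mono2') auto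
  finally show "(u - a) powr -\<beta> \<le> u powr -\<beta> * (1 - a / \<rho>) powr -\<beta>" .
  have "u powr -\<beta> * (1 + a / \<rho>) powr -\<beta> \<le> u powr -\<beta> * (1 + a / u) powr -\<beta>"
    using \<beta> ratio by (intro mult_left_mono powr_mono2') auto
  also have "\<dots> = (u + a) powr -\<beta>"
    using u ratio by (simp add: powr_mult[symmetric] distrib_left)
  finally show "u powr -\<beta> * (1 + a / \<rho>) powr -\<beta> \<le> (u + a) powr -\<beta>" .
  show "(1 + a / \<rho>) powr -\<beta> \<le> 1" "1 \<le> (1 - a / \<rho>) powr -\<beta>"
    using \<beta> ratio powr_mono2'[of "-\<beta>" 1 "1 + a / \<rho>"] powr_mono2'[of "-\<beta>" "1 - a / \<rho>" 1] by auto
qed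

lemma near_defect_nonneg:
  assumes "0 < \<beta>" "0 < \<rho>" "0 \<le> a" "a < \<rho>"
  shows "0 \<le> near_defect \<beta> \<rho> a"
  using powr_neg_shift_bounds(3,4)[OF assms(1,2) order_refl assms(3,4)] by (simp add: near_defect_def)

lemma near_defect_tendsto_0:
  assumes "0 < \<rho>"
  shows "((\<lambda>t. near_defect \<beta> \<rho> (t * K)) \<longlongrightarrow> 0) (at_right 0)"
proof -
  have "((\<lambda>t. near_defect \<beta> \<rho> (t * K)) \<longlongrightarrow> (1 - 0 * K / \<rho>) powr -\<beta> - (1 + 0 * K / \<rho>) powr -\<beta>) (at_right 0)"
    unfolding near_defect_def using assms by (intro tendsto_intros) auto
  then show ?thesis by simp
qed

lemma ereal_abs_deviation_le:
  fixes G :: ereal and u a \<rho> \<beta> c M m Mk e :: real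
  assumes \<beta>: "0 < \<beta>" and \<rho>: "0 < \<rho>" "\<rho> \<le> u" and a: "0 \<le> a" "a < \<rho>"
    and nonneg: "0 \<le> c" "0 \<le> M" "0 \<le> m" "0 \<le> e" and Mk: "M - m \<le> Mk"
    and lower: "ereal (c * (u + a) powr -\<beta> * Mk) \<le> G"
    and upper: "G \<le> ereal (c * (u - a) powr -\<beta> * M + e)"
  shows "\<bar>G - ereal (c * u powr -\<beta> * M)\<bar> \<le> ereal ((c * M * near_defect \<beta> \<rho> a + c * m) * u powr -\<beta> + e)"
proof -
  note shift = powr_neg_shift_bounds[OF \<beta> \<rho> a]
  obtain g where g: "G = ereal g"
    using lower upper by (cases G) (simp_all del: ereal_less_eq)
  have cM: "0 \<le> c * M" using nonneg by simp
  have "c * (u - a) powr -\<beta> * M - c * u powr -\<beta> * M \<le> c * M * (u powr -\<beta> * ((1 - a / \<rho>) powr -\<beta> - 1))"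
    using mult_left_mono[OF shift(1) cM] by (simp add: algebra_simps)
  also have "\<dots> \<le> c * M * (u powr -\<beta> * near_defect \<beta> \<rho> a)"
    using shift(3) cM by (intro mult_left_mono) (auto simp: near_defect_def)
  finally have near: "c * (u - a) powr -\<beta> * M - c * u powr -\<beta> * M \<le> c * M * (u powr -\<beta> * near_defect \<beta> \<rho> a)" .
  have split: "(c * M * near_defect \<beta> \<rho> a + c * m) * u powr -\<beta> = c * M * (u powr -\<beta> * near_defect \<beta> \<rho> a) + c * m * u powr -\<beta>"
    by (simp add: algebra_simps)
  have "0 \<le> c * m * u powr -\<beta>" "g \<le> c * (u - a) powr -\<beta> * M + e"
    using nonneg upper g by auto
  then have up: "g - c * u powr -\<beta> * M \<le> (c * M * near_defect \<beta> \<rho> a + c * m) * u powr -\<beta> + e"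
    unfolding split using near by linarith
  have "c * u powr -\<beta> * M - g \<le> c * u powr -\<beta> * M - c * (u + a) powr -\<beta> * (M - m)"
    using lower g mult_left_mono[OF Mk, of "c * (u + a) powr -\<beta>"] nonneg by (simp add: mult.assoc)
  also have "\<dots> = c * M * (u powr -\<beta> - (u + a) powr -\<beta>) + c * m * (u + a) powr -\<beta>"
    by (simp add: algebra_simps)
  also have "\<dots> \<le> c * M * (u powr -\<beta> * near_defect \<beta> \<rho> a) + c * m * u powr -\<beta>"
  proof (intro add_mono mult_left_mono)
    have "u powr -\<beta> * 1 \<le> u powr -\<beta> * (1 - a / \<rho>) powr -\<beta>"
      using shift(4) by (intro mult_left_mono) auto
    then show "u powr -\<beta> - (u + a) powr -\<beta> \<le> u powr -\<beta> * near_defect \<beta> \<rho> a"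
      unfolding near_defect_def right_diff_distrib using shift(2) by linarith
    show "(u + a) powr -\<beta> \<le> u powr -\<beta>"
      using \<beta> \<rho> a by (intro powr_mono2') auto
  qed (use nonneg in auto)
  finally have low: "c * u powr -\<beta> * M - g \<le> (c * M * near_defect \<beta> \<rho> a + c * m) * u powr -\<beta> + e"
    unfolding split using nonneg by linarith
  show ?thesis using up low g by simp
qed

lemma powr_neg_divide:
  fixes u s \<beta> :: real
  assumes "0 < u" "0 < s"
  shows "(u / s) powr -\<beta> = u powr -\<beta> * s powr \<beta>"
  using assms by (simp add: powr_divide powr_minus field_simps)

locale radial_profile =
  fixes \<Phi> :: "real \<Rightarrow> real" and R :: real
  assumes nonneg: "\<And>s. 0 \<le> s \<Longrightarrow> 0 \<le> \<Phi> s"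
    and antimono: "\<And>s t. 0 \<le> s \<Longrightarrow> s \<le> t \<Longrightarrow> \<Phi> t \<le> \<Phi> s"
    and radius_pos: "0 < R"
    and vanishes: "\<And>s. R \<le> s \<Longrightarrow> \<Phi> s = 0"
begin

definition peak :: "real \<Rightarrow> real" where
  "peak \<beta> = (SUP s\<in>{0<..}. s powr \<beta> * \<Phi> s)"

lemma bdd_above_peak:
  assumes "0 < \<beta>"
  shows "bdd_above ((\<lambda>s. s powr \<beta> * \<Phi> s) ` {0<..})"
proof (rule bdd_aboveI2)
  fix s :: real assume s: "s \<in> {0<..}"
  show "s powr \<beta> * \<Phi> s \<le> R powr \<beta> * \<Phi> 0"
  proof (cases "R \<le> s")
    case True
    then show ?thesis using vanishes radius_pos nonneg[of 0] by simp
  next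
    case False
    then show ?thesis
      using s assms nonneg[of s] nonneg[of 0] antimono[of 0 s] by (intro mult_mono powr_mono2) auto
  qed
qed

lemma le_peak: "0 < \<beta> \<Longrightarrow> 0 < s \<Longrightarrow> s powr \<beta> * \<Phi> s \<le> peak \<beta>"
  unfolding peak_def by (rule cSUP_upper) (auto intro: bdd_above_peak)

lemma peak_nonneg: "0 < \<beta> \<Longrightarrow> 0 \<le> peak \<beta>"
  using le_peak[of \<beta> 1] nonneg[of 1] by simp

lemma rescaled_profile_le_peak:
  assumes "0 < \<beta>" "0 < u" "0 < r"
  shows "r powr -\<beta> * \<Phi> (u / r) \<le> peak \<beta> * u powr -\<beta>"
proof -
  have "r powr -\<beta> * \<Phi> (u / r) = u powr -\<beta> * ((u / r) powr \<beta> * \<Phi> (u / r))"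
    using powr_neg_divide[of u "u / r" \<beta>] assms by simp
  also have "\<dots> \<le> u powr -\<beta> * peak \<beta>"
    using assms by (intro mult_left_mono le_peak) auto
  finally show ?thesis by (simp add: mult.commute)
qed

lemma SUP_rescaled_profile:
  assumes \<beta>: "0 < \<beta>" and u: "0 < u"
  shows "(SUP r\<in>{0<..}. ereal (r powr -\<beta> * \<Phi> (u / r))) = ereal (peak \<beta> * u powr -\<beta>)"
    (is "?S = _")
proof (rule antisym)
  show le: "?S \<le> ereal (peak \<beta> * u powr -\<beta>)"
    using rescaled_profile_le_peak[OF \<beta> u] by (intro SUP_least) auto
  have ge: "ereal (u powr -\<beta> * (s powr \<beta> * \<Phi> s)) \<le> ?S" if s: "0 < s" for s
    using SUP_upper[of "u / s" "{0<..}" "\<lambda>r. ereal (r powr -\<beta> * \<Phi> (u / r))"] u s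
    by (simp add: powr_neg_divide mult.assoc)
  obtain S where S: "?S = ereal S"
    using le ge[of 1] by (cases ?S) auto
  have "peak \<beta> \<le> S / u powr -\<beta>"
    unfolding peak_def using ge S u by (intro cSUP_least) (auto simp: field_simps)
  then show "ereal (peak \<beta> * u powr -\<beta>) \<le> ?S"
    using S u by (simp add: field_simps)
qed

lemma SUP_dil_kernel_radial:
  fixes x :: "'a::euclidean_space"
  assumes \<alpha>: "\<alpha> < real DIM('a)" and x: "x \<noteq> 0"
  shows "(SUP r\<in>{0<..}. ereal (dil_kernel (\<lambda>z. \<Phi> (norm z)) \<alpha> r x))
    = ereal (peak (real DIM('a) - \<alpha>) * norm x powr -(real DIM('a) - \<alpha>))"
proof -
  have "(SUP r\<in>{0<..}. ereal (dil_kernel (\<lambda>z. \<Phi> (norm z)) \<alpha> r x))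
      = (SUP r\<in>{0<..}. ereal (r powr -(real DIM('a) - \<alpha>) * \<Phi> (norm x / r)))"
    by (intro SUP_cong) (auto simp: dil_kernel_def)
  also have "\<dots> = ereal (peak (real DIM('a) - \<alpha>) * norm x powr -(real DIM('a) - \<alpha>))"
    using \<alpha> x by (intro SUP_rescaled_profile) auto
  finally show ?thesis .
qed

lemma borel_measurable_profile:
  assumes h: "h \<in> borel_measurable M" and h_nonneg: "\<And>y. 0 \<le> h y"
  shows "(\<lambda>y. \<Phi> (h y)) \<in> borel_measurable M"
proof -
  have "mono (\<lambda>s. - \<Phi> (max 0 s))"
    by (rule monoI) (simp add: antimono)
  then have "(\<lambda>s. - (- \<Phi> (max 0 s))) \<in> borel_measurable borel"
    by (intro borel_measurable_uminus borel_measurable_mono)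
  from measurable_compose[OF h this] show ?thesis
    using h_nonneg by (simp add: max_absorb2)
qed

lemma frac_max_dilate_measure:
  fixes V :: "'a::euclidean_space measure"
  assumes V: "sets V = sets borel"
  shows "frac_max \<alpha> (\<lambda>z. \<Phi> (norm z)) (dilate_measure t V) x =
    (SUP r\<in>{0<..}. enn2ereal (ennreal (1 / r powr (real DIM('a) - \<alpha>)) *
        (\<integral>\<^sup>+ y. ennreal (\<Phi> (norm (x - t *\<^sub>R y) / r)) \<partial>V)))"
  unfolding frac_max_def dilate_measure_def
proof (intro SUP_cong refl arg_cong[where f=enn2ereal] arg_cong2[where f="(*)"])
  fix r :: real assume "r \<in> {0<..}"
  then have r: "0 < r" by simp
  have "(\<lambda>y. t *\<^sub>R y) \<in> V \<rightarrow>\<^sub>M borel"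
    using V by (simp add: measurable_cong_sets[OF V refl])
  moreover have "(\<lambda>y. \<Phi> (norm ((1 / r) *\<^sub>R (x - y)))) \<in> borel_measurable borel"
    by (rule borel_measurable_profile) auto
  ultimately show "(\<integral>\<^sup>+ y. ennreal (\<Phi> (norm ((1 / r) *\<^sub>R (x - y)))) \<partial>distr V borel (\<lambda>y. t *\<^sub>R y))
      = (\<integral>\<^sup>+ y. ennreal (\<Phi> (norm (x - t *\<^sub>R y) / r)) \<partial>V)"
    using r by (simp add: nn_integral_distr)
qed

lemma nn_integral_dilate_le:
  fixes V :: "'a::euclidean_space measure"
  assumes V: "sets V = sets borel" and t: "0 < t" and r: "0 < r" and K: "t * K \<le> norm x"
  shows "(\<integral>\<^sup>+ y. ennreal (\<Phi> (norm (x - t *\<^sub>R y) / r)) \<partial>V) \<le>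
     ennreal (\<Phi> ((norm x - t * K) / r)) * emeasure V UNIV +
     ennreal (\<Phi> 0) * emeasure V {y. K < norm y \<and> t *\<^sub>R y \<in> ball x (R * r)}"
proof -
  define A where "A = {y. K < norm y \<and> t *\<^sub>R y \<in> ball x (R * r)}"
  have space: "space V = UNIV" using sets_eq_imp_space_eq[OF V] by simp
  have A: "A \<in> sets V"
    unfolding A_def V mem_ball by measurable
  have "ennreal (\<Phi> (norm (x - t *\<^sub>R y) / r)) \<le> ennreal (\<Phi> ((norm x - t * K) / r)) + ennreal (\<Phi> 0) * indicator A y" for y
  proof (cases "norm y \<le> K")
    case True
    then have "norm (t *\<^sub>R y) \<le> t * K" using t by (simp add: mult_left_mono)
    then have "norm x - t * K \<le> norm (x - t *\<^sub>R y)"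
      using norm_triangle_ineq2[of x "t *\<^sub>R y"] by linarith
    then have "\<Phi> (norm (x - t *\<^sub>R y) / r) \<le> \<Phi> ((norm x - t * K) / r)"
      using K r by (intro antimono divide_right_mono) auto
    then show ?thesis by (simp add: add_increasing2 ennreal_leI)
  next
    case False
    show ?thesis
    proof (cases "norm (x - t *\<^sub>R y) < R * r")
      case True
      then have "y \<in> A" using False by (simp add: A_def dist_norm)
      then show ?thesis using r antimono[of 0] by (simp add: add_increasing ennreal_leI)
    next
      case False
      then have "R \<le> norm (x - t *\<^sub>R y) / r" using r by (simp add: pos_le_divide_eq mult.commute)
      then show ?thesis by (simp add: vanishes)
    qed
  qed
  then have "(\<integral>\<^sup>+ y. ennreal (\<Phi> (norm (x - t *\<^sub>R y) / r)) \<partial>V) \<le>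
      (\<integral>\<^sup>+ y. ennreal (\<Phi> ((norm x - t * K) / r)) + ennreal (\<Phi> 0) * indicator A y \<partial>V)"
    by (intro nn_integral_mono)
  also have "\<dots> = ennreal (\<Phi> ((norm x - t * K) / r)) * emeasure V UNIV + ennreal (\<Phi> 0) * emeasure V A"
    using A by (simp add: nn_integral_add nn_integral_cmult_indicator nn_integral_const space[symmetric])
  finally show ?thesis by (simp add: A_def)
qed

lemma nn_integral_dilate_ge:
  fixes V :: "'a::euclidean_space measure"
  assumes V: "sets V = sets borel" and t: "0 < t" and r: "0 < r"
  shows "ennreal (\<Phi> ((norm x + t * K) / r)) * emeasure V {y. norm y \<le> K} \<le>
     (\<integral>\<^sup>+ y. ennreal (\<Phi> (norm (x - t *\<^sub>R y) / r)) \<partial>V)"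
proof -
  have "{y::'a. norm y \<le> K} \<in> sets V" unfolding V by measurable
  then have "ennreal (\<Phi> ((norm x + t * K) / r)) * emeasure V {y. norm y \<le> K} =
     (\<integral>\<^sup>+ y. ennreal (\<Phi> ((norm x + t * K) / r)) * indicator {y. norm y \<le> K} y \<partial>V)"
    by (simp add: nn_integral_cmult_indicator)
  also have "\<dots> \<le> (\<integral>\<^sup>+ y. ennreal (\<Phi> (norm (x - t *\<^sub>R y) / r)) \<partial>V)"
  proof (intro nn_integral_mono)
    fix y :: 'a
    show "ennreal (\<Phi> ((norm x + t * K) / r)) * indicator {y. norm y \<le> K} y \<le> ennreal (\<Phi> (norm (x - t *\<^sub>R y) / r))"
    proof (cases "norm y \<le> K")
      case True
      then have "norm (t *\<^sub>R y) \<le> t * K" using t by (simp add: mult_left_mono)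
      then have "norm (x - t *\<^sub>R y) \<le> norm x + t * K"
        using norm_triangle_ineq4[of x "t *\<^sub>R y"] by linarith
      then have "\<Phi> ((norm x + t * K) / r) \<le> \<Phi> (norm (x - t *\<^sub>R y) / r)"
        using r by (intro antimono divide_right_mono) auto
      then show ?thesis using True by (simp add: ennreal_leI)
    qed simp
  qed
  finally show ?thesis .
qed

lemma frac_max_dilate_le:
  fixes V :: "'a::euclidean_space measure" and \<alpha> :: real
  defines "\<beta> \<equiv> real DIM('a) - \<alpha>"
  assumes V: "finite_measure V" "sets V = sets borel" and \<alpha>: "\<alpha> < real DIM('a)"
    and t: "0 < t" and K: "t * K < norm x" and L: "0 \<le> L"
    and far: "\<And>r. 0 < r \<Longrightarrow> emeasure V {y. K < norm y \<and> t *\<^sub>R y \<in> ball x r} \<le> ennreal (L * r powr \<beta>)"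
  shows "frac_max \<alpha> (\<lambda>z. \<Phi> (norm z)) (dilate_measure t V) x
    \<le> ereal (peak \<beta> * (norm x - t * K) powr -\<beta> * measure V UNIV + \<Phi> 0 * R powr \<beta> * L)"
proof -
  interpret finite_measure V by (rule V(1))
  have \<beta>: "0 < \<beta>" using \<alpha> by (simp add: \<beta>_def)
  define u where "u = norm x - t * K"
  define M where "M = measure V UNIV"
  have u: "0 < u" using K by (simp add: u_def)
  have bound: "ennreal (1 / r powr \<beta>) * (\<integral>\<^sup>+ y. ennreal (\<Phi> (norm (x - t *\<^sub>R y) / r)) \<partial>V)
      \<le> ennreal (peak \<beta> * u powr -\<beta> * M + \<Phi> 0 * R powr \<beta> * L)" if r: "0 < r" for r
  proof -
    have Rr: "0 < R * r" using r radius_pos by simp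
    have "(\<integral>\<^sup>+ y. ennreal (\<Phi> (norm (x - t *\<^sub>R y) / r)) \<partial>V)
        \<le> ennreal (\<Phi> (u / r)) * emeasure V UNIV
          + ennreal (\<Phi> 0) * emeasure V {y. K < norm y \<and> t *\<^sub>R y \<in> ball x (R * r)}"
      using nn_integral_dilate_le[OF V(2) t r, of K x] K by (simp add: u_def)
    also have "\<dots> \<le> ennreal (\<Phi> (u / r)) * ennreal M + ennreal (\<Phi> 0) * ennreal (L * (R * r) powr \<beta>)"
      using far[OF Rr] by (intro add_mono mult_left_mono) (auto simp: M_def emeasure_eq_measure)
    also have "\<dots> = ennreal (\<Phi> (u / r) * M + \<Phi> 0 * (L * (R * r) powr \<beta>))"
      using u r L nonneg[of 0] nonneg[of "u / r"] by (simp add: M_def ennreal_mult ennreal_plus)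
    finally have "ennreal (1 / r powr \<beta>) * (\<integral>\<^sup>+ y. ennreal (\<Phi> (norm (x - t *\<^sub>R y) / r)) \<partial>V)
        \<le> ennreal (1 / r powr \<beta>) * ennreal (\<Phi> (u / r) * M + \<Phi> 0 * (L * (R * r) powr \<beta>))"
      by (rule mult_left_mono) simp
    also have "\<dots> = ennreal (1 / r powr \<beta> * (\<Phi> (u / r) * M + \<Phi> 0 * (L * (R * r) powr \<beta>)))"
      using u r L nonneg[of 0] nonneg[of "u / r"] by (intro ennreal_mult[symmetric]) (auto simp: M_def)
    also have "1 / r powr \<beta> * (\<Phi> (u / r) * M + \<Phi> 0 * (L * (R * r) powr \<beta>))
        = r powr -\<beta> * \<Phi> (u / r) * M + \<Phi> 0 * R powr \<beta> * L"
      using r radius_pos by (simp add: powr_mult powr_minus field_simps)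
    also have "\<dots> \<le> peak \<beta> * u powr -\<beta> * M + \<Phi> 0 * R powr \<beta> * L"
      using rescaled_profile_le_peak[OF \<beta> u r] by (simp add: M_def mult_right_mono)
    finally show ?thesis by (simp add: ennreal_leI)
  qed
  have "0 \<le> peak \<beta> * u powr -\<beta> * M + \<Phi> 0 * R powr \<beta> * L"
    using peak_nonneg[OF \<beta>] nonneg[of 0] L by (simp add: M_def)
  then show ?thesis
    unfolding frac_max_dilate_measure[OF V(2)] \<beta>_def[symmetric] u_def[symmetric] M_def[symmetric]
    using bound by (intro SUP_least enn2ereal_le_ereal) auto
qed

lemma frac_max_dilate_ge:
  fixes V :: "'a::euclidean_space measure" and \<alpha> :: real
  defines "\<beta> \<equiv> real DIM('a) - \<alpha>"
  assumes V: "finite_measure V" "sets V = sets borel" and \<alpha>: "\<alpha> < real DIM('a)"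
    and t: "0 < t" and x: "0 < norm x + t * K"
  shows "ereal (peak \<beta> * (norm x + t * K) powr -\<beta> * measure V {y. norm y \<le> K})
    \<le> frac_max \<alpha> (\<lambda>z. \<Phi> (norm z)) (dilate_measure t V) x"
proof -
  interpret finite_measure V by (rule V(1))
  have \<beta>: "0 < \<beta>" using \<alpha> by (simp add: \<beta>_def)
  define w where "w = norm x + t * K"
  define Mk where "Mk = measure V {y. norm y \<le> K}"
  have w: "0 < w" using x by (simp add: w_def)
  have each: "ereal (Mk * (r powr -\<beta> * \<Phi> (w / r))) \<le> frac_max \<alpha> (\<lambda>z. \<Phi> (norm z)) (dilate_measure t V) x"
    if r: "0 < r" for r
  proof -
    have Mk: "0 \<le> Mk" and \<Phi>: "0 \<le> \<Phi> (w / r)" using r w nonneg[of "w / r"] by (auto simp: Mk_def)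
    have "ennreal (Mk * (r powr -\<beta> * \<Phi> (w / r))) = ennreal (1 / r powr \<beta> * (\<Phi> (w / r) * Mk))"
      by (simp add: powr_minus divide_inverse mult_ac)
    also have "\<dots> = ennreal (1 / r powr \<beta>) * (ennreal (\<Phi> (w / r)) * emeasure V {y. norm y \<le> K})"
      using Mk \<Phi> ennreal_mult[of "1 / r powr \<beta>" "\<Phi> (w / r) * Mk"] ennreal_mult[of "\<Phi> (w / r)" Mk]
      by (simp add: Mk_def emeasure_eq_measure)
    also have "\<dots> \<le> ennreal (1 / r powr \<beta>) * (\<integral>\<^sup>+ y. ennreal (\<Phi> (norm (x - t *\<^sub>R y) / r)) \<partial>V)"
      using nn_integral_dilate_ge[OF V(2) t r] by (intro mult_left_mono) (auto simp: w_def)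
    finally have "ereal (Mk * (r powr -\<beta> * \<Phi> (w / r)))
        \<le> enn2ereal (ennreal (1 / r powr \<beta>) * (\<integral>\<^sup>+ y. ennreal (\<Phi> (norm (x - t *\<^sub>R y) / r)) \<partial>V))"
      using r w nonneg[of "w / r"] by (intro ereal_le_enn2ereal) (auto simp: Mk_def)
    also have "\<dots> \<le> frac_max \<alpha> (\<lambda>z. \<Phi> (norm z)) (dilate_measure t V) x"
      unfolding frac_max_dilate_measure[OF V(2)] \<beta>_def using r by (intro SUP_upper) simp
    finally show ?thesis .
  qed
  have "ereal (peak \<beta> * w powr -\<beta> * Mk) = ereal Mk * (SUP r\<in>{0<..}. ereal (r powr -\<beta> * \<Phi> (w / r)))"
    using SUP_rescaled_profile[OF \<beta> w] by (simp add: mult.commute)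
  also have "\<dots> = (SUP r\<in>{0<..}. ereal (Mk * (r powr -\<beta> * \<Phi> (w / r))))"
    using w nonneg by (subst SUP_ereal_mult_left[symmetric]) (auto simp: Mk_def)
  also have "\<dots> \<le> frac_max \<alpha> (\<lambda>z. \<Phi> (norm z)) (dilate_measure t V) x"
    using each by (intro SUP_least) auto
  finally show ?thesis by (simp add: w_def Mk_def)
qed

definition deviation :: "real \<Rightarrow> real \<Rightarrow> 'a::euclidean_space measure \<Rightarrow> 'a \<Rightarrow> ereal" where
  "deviation \<alpha> t V x = frac_max \<alpha> (\<lambda>z. \<Phi> (norm z)) (dilate_measure t V) x
    - (SUP r\<in>{0<..}. ereal (dil_kernel (\<lambda>z. \<Phi> (norm z)) \<alpha> r x)) * ereal (measure V UNIV)"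

lemma frac_max_dilate_deviation:
  fixes V :: "'a::euclidean_space measure" and \<alpha> :: real
  defines "\<beta> \<equiv> real DIM('a) - \<alpha>"
  assumes V: "finite_measure V" "sets V = sets borel" and \<alpha>: "\<alpha> < real DIM('a)"
    and \<rho>: "0 < \<rho>" "\<rho> \<le> norm x" and t: "0 < t" and K: "0 \<le> K" "t * K \<le> \<rho> / 2" and L: "0 \<le> L"
    and far: "\<And>r. 0 < r \<Longrightarrow> emeasure V {y. K < norm y \<and> t *\<^sub>R y \<in> ball x r} \<le> ennreal (L * r powr \<beta>)"
  shows "\<bar>deviation \<alpha> t V x\<bar>
    \<le> ereal (peak \<beta> * (measure V UNIV * near_defect \<beta> \<rho> (t * K) + measure V {y. K < norm y}) * norm x powr -\<beta> + \<Phi> 0 * R powr \<beta> * L)"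
proof -
  interpret finite_measure V by (rule V(1))
  have \<beta>: "0 < \<beta>" using \<alpha> by (simp add: \<beta>_def)
  have tK: "0 \<le> t * K" "t * K < \<rho>" using t K \<rho> by auto
  have x: "x \<noteq> 0" using \<rho> by auto
  have "measure V (space V - {y. K < norm y}) = measure V (space V) - measure V {y. K < norm y}"
    by (rule finite_measure_compl) (simp add: V(2))
  then have Mk: "measure V UNIV - measure V {y. K < norm y} \<le> measure V {y. norm y \<le> K}"
    using sets_eq_imp_space_eq[OF V(2)] by (simp add: set_diff_eq not_less)
  have kernel: "(SUP r\<in>{0<..}. ereal (dil_kernel (\<lambda>z. \<Phi> (norm z)) \<alpha> r x)) * ereal (measure V UNIV)
      = ereal (peak \<beta> * norm x powr -\<beta> * measure V UNIV)"
    using SUP_dil_kernel_radial[OF \<alpha> x] by (simp add: \<beta>_def)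
  have "\<bar>frac_max \<alpha> (\<lambda>z. \<Phi> (norm z)) (dilate_measure t V) x - ereal (peak \<beta> * norm x powr -\<beta> * measure V UNIV)\<bar>
      \<le> ereal ((peak \<beta> * measure V UNIV * near_defect \<beta> \<rho> (t * K) + peak \<beta> * measure V {y. K < norm y})
        * norm x powr -\<beta> + \<Phi> 0 * R powr \<beta> * L)"
  proof (rule ereal_abs_deviation_le[OF \<beta> \<rho> tK peak_nonneg[OF \<beta>] measure_nonneg measure_nonneg _ Mk])
    show "0 \<le> \<Phi> 0 * R powr \<beta> * L" using nonneg[of 0] L by simp
    show "ereal (peak \<beta> * (norm x + t * K) powr -\<beta> * measure V {y. norm y \<le> K})
        \<le> frac_max \<alpha> (\<lambda>z. \<Phi> (norm z)) (dilate_measure t V) x"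
      unfolding \<beta>_def using tK \<rho> by (intro frac_max_dilate_ge[OF V \<alpha> t]) auto
    show "frac_max \<alpha> (\<lambda>z. \<Phi> (norm z)) (dilate_measure t V) x
        \<le> ereal (peak \<beta> * (norm x - t * K) powr -\<beta> * measure V UNIV + \<Phi> 0 * R powr \<beta> * L)"
      unfolding \<beta>_def using tK \<rho> far by (intro frac_max_dilate_le[OF V \<alpha> t _ L]) (auto simp: \<beta>_def)
  qed
  then show ?thesis
    unfolding deviation_def kernel by (simp add: algebra_simps)
qed

lemma deviation_level_set_subset:
  fixes V :: "'a::euclidean_space measure" and \<alpha> :: real
  defines "\<beta> \<equiv> real DIM('a) - \<alpha>"
  assumes V: "finite_measure V" "sets V = sets borel" and \<alpha>: "\<alpha> < real DIM('a)"
    and \<rho>: "0 < \<rho>" and t: "0 < t" and K: "0 \<le> K" "t * K \<le> \<rho> / 2"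
    and L: "0 \<le> L" "\<Phi> 0 * R powr \<beta> * L \<le> l / 2" and l: "0 < l"
  shows "{x \<in> UNIV - ball 0 \<rho>. ereal l < \<bar>deviation \<alpha> t V x\<bar>}
    \<subseteq> ball 0 ((2 * (peak \<beta> * (measure V UNIV * near_defect \<beta> \<rho> (t * K) + measure V {y. K < norm y})) / l) powr (1 / \<beta>))
      \<union> {x. \<exists>r>0. ennreal (L * r powr \<beta>) < emeasure V {y \<in> {y. K < norm y}. t *\<^sub>R y \<in> ball x r}}"
proof (intro subsetI)
  fix x assume x: "x \<in> {x \<in> UNIV - ball 0 \<rho>. ereal l < \<bar>deviation \<alpha> t V x\<bar>}"
  have \<beta>: "0 < \<beta>" using \<alpha> by (simp add: \<beta>_def)
  define \<kappa> where "\<kappa> = peak \<beta> * (measure V UNIV * near_defect \<beta> \<rho> (t * K) + measure V {y. K < norm y})"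
  define u where "u = norm x"
  have u: "0 < u" "\<rho> \<le> u" using x \<rho> by (auto simp: u_def)
  show "x \<in> ball 0 ((2 * \<kappa> / l) powr (1 / \<beta>))
      \<union> {x. \<exists>r>0. ennreal (L * r powr \<beta>) < emeasure V {y \<in> {y. K < norm y}. t *\<^sub>R y \<in> ball x r}}"
  proof (rule disjCI[THEN iffD2[OF Un_iff]])
    assume near: "x \<notin> {x. \<exists>r>0. ennreal (L * r powr \<beta>) < emeasure V {y \<in> {y. K < norm y}. t *\<^sub>R y \<in> ball x r}}"
    have far: "emeasure V {y. K < norm y \<and> t *\<^sub>R y \<in> ball x r} \<le> ennreal (L * r powr \<beta>)" if "0 < r" for r
    proof -
      have "emeasure V {y \<in> {y. K < norm y}. t *\<^sub>R y \<in> ball x r} \<le> ennreal (L * r powr \<beta>)"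
        using near that not_less by blast
      then show ?thesis by simp
    qed
    have "ereal l < \<bar>deviation \<alpha> t V x\<bar>"
      using x by simp
    also have "\<dots> \<le> ereal (\<kappa> * u powr -\<beta> + \<Phi> 0 * R powr \<beta> * L)"
      using frac_max_dilate_deviation[OF V \<alpha> \<rho> u(2)[unfolded u_def] t K L(1) far[unfolded \<beta>_def]]
      unfolding \<kappa>_def \<beta>_def u_def .
    finally have "l < \<kappa> * u powr -\<beta> + \<Phi> 0 * R powr \<beta> * L" by simp
    moreover have "\<kappa> * u powr -\<beta> = \<kappa> / u powr \<beta>"
      by (simp add: powr_minus_divide)
    ultimately have "l / 2 < \<kappa> / u powr \<beta>"
      using L(2) by linarith
    then have "l / 2 * u powr \<beta> < \<kappa>"
      using u by (simp add: pos_less_divide_eq)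
    then have "u powr \<beta> < 2 * \<kappa> / l"
      using l by (simp add: pos_less_divide_eq mult.commute)
    then have "(u powr \<beta>) powr (1 / \<beta>) < (2 * \<kappa> / l) powr (1 / \<beta>)"
      using \<beta> by (intro powr_less_mono2) auto
    then show "x \<in> ball 0 ((2 * \<kappa> / l) powr (1 / \<beta>))"
      using \<beta> u by (simp add: powr_powr u_def)
  qed
qed

lemma emeasure_deviation_level_set_le:
  fixes V :: "'a::euclidean_space measure" and \<alpha> :: real
  defines "\<beta> \<equiv> real DIM('a) - \<alpha>"
  assumes V: "finite_measure V" "sets V = sets borel" and \<alpha>: "0 \<le> \<alpha>" "\<alpha> < real DIM('a)"
    and \<rho>: "0 < \<rho>" and t: "0 < t" and K: "0 \<le> K" "t * K \<le> \<rho> / 2" and l: "0 < l"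
  shows "emeasure lebesgue {x \<in> UNIV - ball 0 \<rho>. ereal l < \<bar>deviation \<alpha> t V x\<bar>}
    \<le> ennreal (2 ^ DIM('a) * (2 * (peak \<beta> * (measure V UNIV * near_defect \<beta> \<rho> (t * K) + measure V {y. K < norm y})) / l) powr (real DIM('a) / \<beta>)
      + 10 ^ DIM('a) * (2 * (\<Phi> 0 + 1) * R powr \<beta> * measure V {y. K < norm y} / l) powr (real DIM('a) / \<beta>))"
proof -
  have \<beta>: "0 < \<beta>" "\<beta> \<le> real DIM('a)" using \<alpha> by (auto simp: \<beta>_def)
  define C where "C = 2 * (\<Phi> 0 + 1) * R powr \<beta>"
  have C: "0 < C" using nonneg[of 0] radius_pos by (simp add: C_def add_nonneg_pos)
  define L where "L = l / C"
  have L: "0 < L" "\<Phi> 0 * R powr \<beta> * L \<le> l / 2"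
    using C l radius_pos by (auto simp: L_def C_def field_simps)
  have scale: "(\<lambda>y::'a. t *\<^sub>R y) \<in> borel_measurable V"
    by (simp add: measurable_cong_sets[OF V(2) refl])
  have tail: "{y::'a. K < norm y} \<in> sets V" unfolding V(2) by measurable
  obtain U where U: "U \<in> sets lebesgue"
    "{x. \<exists>r>0. ennreal (L * r powr \<beta>) < emeasure V {y \<in> {y. K < norm y}. t *\<^sub>R y \<in> ball x r}} \<subseteq> U"
    "emeasure lebesgue U \<le> ennreal (10 ^ DIM('a) * (measure V {y. K < norm y} / L) powr (real DIM('a) / \<beta>))"
    using Vitali_weak_type_bound[OF V(1) scale tail L(1) \<beta>] by blast
  define r where "r = (2 * (peak \<beta> * (measure V UNIV * near_defect \<beta> \<rho> (t * K) + measure V {y. K < norm y})) / l) powr (1 / \<beta>)"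
  have "{x \<in> UNIV - ball 0 \<rho>. ereal l < \<bar>deviation \<alpha> t V x\<bar>} \<subseteq> ball 0 r \<union> U"
    using deviation_level_set_subset[OF V \<alpha>(2) \<rho> t K less_imp_le[OF L(1)] L(2)[unfolded \<beta>_def] l] U(2)
    unfolding r_def \<beta>_def by blast
  then have "emeasure lebesgue {x \<in> UNIV - ball 0 \<rho>. ereal l < \<bar>deviation \<alpha> t V x\<bar>} \<le> emeasure lebesgue (ball 0 r \<union> U)"
    using U(1) by (intro emeasure_mono) auto
  also have "\<dots> \<le> emeasure lebesgue (ball (0::'a) r) + emeasure lebesgue U"
    using U(1) by (intro emeasure_subadditive) auto
  also have "\<dots> \<le> ennreal ((2 * r) ^ DIM('a)) + ennreal (10 ^ DIM('a) * (measure V {y. K < norm y} / L) powr (real DIM('a) / \<beta>))"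
    using U(3) by (intro add_mono emeasure_lebesgue_ball_le) (auto simp: r_def)
  also have "(2 * r) ^ DIM('a) = 2 ^ DIM('a) * (2 * (peak \<beta> * (measure V UNIV * near_defect \<beta> \<rho> (t * K) + measure V {y. K < norm y})) / l) powr (real DIM('a) / \<beta>)"
    by (simp add: r_def power_mult_distrib powr_powr flip: powr_realpow')
  also have "measure V {y. K < norm y} / L = C * measure V {y. K < norm y} / l"
    using C by (simp add: L_def)
  finally show ?thesis
    by (simp add: C_def ennreal_plus[symmetric] del: ennreal_plus)
qed

lemma weak_Lp_norm_deviation_le:
  fixes V :: "'a::euclidean_space measure" and \<alpha> :: real
  defines "\<beta> \<equiv> real DIM('a) - \<alpha>"
  assumes V: "finite_measure V" "sets V = sets borel" and \<alpha>: "0 \<le> \<alpha>" "\<alpha> < real DIM('a)"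
    and \<rho>: "0 < \<rho>" and t: "0 < t" and K: "0 \<le> K" "t * K \<le> \<rho> / 2"
  shows "weak_Lp_norm (real DIM('a) / (real DIM('a) - \<alpha>)) (UNIV - ball 0 \<rho>) (\<lambda>x. deviation \<alpha> t V x)
    \<le> ennreal ((2 ^ DIM('a) + 10 ^ DIM('a)) powr (\<beta> / real DIM('a))
      * (2 * (peak \<beta> * (measure V UNIV * near_defect \<beta> \<rho> (t * K) + measure V {y. K < norm y})) + 2 * (\<Phi> 0 + 1) * R powr \<beta> * measure V {y. K < norm y}))"
proof -
  have \<beta>: "0 < \<beta>" using \<alpha> by (simp add: \<beta>_def)
  define p where "p = real DIM('a) / \<beta>"
  have p: "0 < p" using \<beta> by (simp add: p_def)
  define a where "a = 2 * (peak \<beta> * (measure V UNIV * near_defect \<beta> \<rho> (t * K) + measure V {y. K < norm y}))"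
  define b where "b = 2 * (\<Phi> 0 + 1) * R powr \<beta> * measure V {y. K < norm y}"
  have a: "0 \<le> a"
    using peak_nonneg[OF \<beta>] near_defect_nonneg[OF \<beta> \<rho>, of "t * K"] t K \<rho> by (simp add: a_def)
  have b: "0 \<le> b" using nonneg[of 0] by (simp add: b_def)
  define A where "A = (2 ^ DIM('a) + 10 ^ DIM('a)) * (a + b) powr p"
  have "weak_Lp_norm p (UNIV - ball 0 \<rho>) (\<lambda>x. deviation \<alpha> t V x) \<le> ennreal (A powr (1 / p))"
  proof (rule weak_Lp_norm_le[OF p])
    show "0 \<le> A" by (simp add: A_def)
    fix l :: real assume l: "0 < l"
    have "emeasure lebesgue {x \<in> UNIV - ball 0 \<rho>. ereal l < \<bar>deviation \<alpha> t V x\<bar>}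
        \<le> ennreal (2 ^ DIM('a) * (a / l) powr p + 10 ^ DIM('a) * (b / l) powr p)"
      using emeasure_deviation_level_set_le[OF V \<alpha> \<rho> t K l] by (simp add: a_def b_def p_def \<beta>_def)
    also have "2 ^ DIM('a) * (a / l) powr p + 10 ^ DIM('a) * (b / l) powr p \<le> A / l powr p"
    proof -
      have "a powr p \<le> (a + b) powr p" "b powr p \<le> (a + b) powr p"
        using a b p by (auto intro: powr_mono2)
      then show ?thesis
        using l by (simp add: A_def powr_divide add_divide_distrib[symmetric] distrib_right divide_right_mono add_mono)
    qed
    finally show "emeasure lebesgue {x \<in> UNIV - ball 0 \<rho>. \<bar>deviation \<alpha> t V x\<bar> > ereal l} \<le> ennreal (A / l powr p)"
      by (simp add: ennreal_leI)
  qed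
  also have "A powr (1 / p) = (2 ^ DIM('a) + 10 ^ DIM('a)) powr (\<beta> / real DIM('a)) * (a + b)"
    using a b \<beta> by (simp add: A_def powr_mult powr_powr p_def)
  finally show ?thesis
    by (simp add: p_def \<beta>_def a_def b_def)
qed

lemma eventually_weak_Lp_norm_deviation_less:
  fixes V :: "'a::euclidean_space measure" and \<alpha> \<rho> \<epsilon> :: real
  assumes V: "finite_measure V" "sets V = sets borel" and \<alpha>: "0 \<le> \<alpha>" "\<alpha> < real DIM('a)"
    and \<rho>: "0 < \<rho>" and \<epsilon>: "0 < \<epsilon>"
  shows "eventually (\<lambda>t. weak_Lp_norm (real DIM('a) / (real DIM('a) - \<alpha>)) (UNIV - ball 0 \<rho>)
      (\<lambda>x. deviation \<alpha> t V x) < ennreal \<epsilon>) (at_right 0)"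
proof -
  define \<beta> where "\<beta> = real DIM('a) - \<alpha>"
  define A where "A = (2 ^ DIM('a) + 10 ^ DIM('a)) powr (\<beta> / real DIM('a))"
  define C where "C = 2 * (\<Phi> 0 + 1) * R powr \<beta>"
  define tail where "tail k = measure V {y. real k < norm y}" for k :: nat
  define bound where "bound t k = A * (2 * (peak \<beta> * (measure V UNIV * near_defect \<beta> \<rho> (t * real k) + tail k))
    + C * tail k)" for t k
  have "(\<lambda>k. A * (2 * peak \<beta> + C) * tail k) \<longlonglongrightarrow> A * (2 * peak \<beta> + C) * 0"
    unfolding tail_def by (intro tendsto_intros measure_norm_gt_LIMSEQ_0 V)
  then have "eventually (\<lambda>k. A * (2 * peak \<beta> + C) * tail k < \<epsilon>) sequentially"
    using \<epsilon> by (intro order_tendstoD(2)) auto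
  then obtain k where k: "A * (2 * peak \<beta> + C) * tail k < \<epsilon>"
    by (auto simp: eventually_sequentially)
  have "((\<lambda>t. bound t k) \<longlongrightarrow> A * (2 * (peak \<beta> * (measure V UNIV * 0 + tail k)) + C * tail k)) (at_right 0)"
    unfolding bound_def using \<rho> by (intro tendsto_intros near_defect_tendsto_0)
  moreover have "A * (2 * (peak \<beta> * (measure V UNIV * 0 + tail k)) + C * tail k) < \<epsilon>"
    using k by (simp add: algebra_simps)
  ultimately have "eventually (\<lambda>t. bound t k < \<epsilon>) (at_right 0)"
    by (rule order_tendstoD(2))
  moreover have "eventually (\<lambda>t. t * real k < \<rho> / 2) (at_right 0)"
    using \<rho> by (intro order_tendstoD(2)[of _ "0 * real k"] tendsto_intros) auto
  moreover have "eventually (\<lambda>t. 0 < t) (at_right (0::real))"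
    by (rule eventually_at_right_less)
  ultimately show ?thesis
  proof eventually_elim
    case (elim t)
    then have "weak_Lp_norm (real DIM('a) / (real DIM('a) - \<alpha>)) (UNIV - ball 0 \<rho>) (\<lambda>x. deviation \<alpha> t V x)
        \<le> ennreal (bound t k)"
      using weak_Lp_norm_deviation_le[OF V \<alpha> \<rho>, of t "real k"]
      by (simp add: bound_def A_def C_def tail_def \<beta>_def)
    also have "\<dots> < ennreal \<epsilon>"
      using elim \<epsilon> by (simp add: ennreal_lessI)
    finally show ?case .
  qed
qed

end

theorem corollary1p2:
  fixes \<Phi> :: "real \<Rightarrow> real" and \<alpha> \<rho> :: real and V :: "'a::euclidean_space measure"
  assumes alpha: "0 \<le> \<alpha>" "\<alpha> < real DIM('a)"
    and Phi_nonneg: "\<And>s. 0 \<le> s \<Longrightarrow> 0 \<le> \<Phi> s"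
    and Phi_decr: "\<And>s t. 0 \<le> s \<Longrightarrow> s \<le> t \<Longrightarrow> \<Phi> t \<le> \<Phi> s"
    and Phi_bdd: "bdd_above (\<Phi> ` {0..})"
    and Phi_supp: "\<exists>R. \<forall>s\<ge>R. \<Phi> s = 0"
    and V_borel: "sets V = sets borel"
    and V_fin: "finite_measure V"
    and rho: "\<rho> > 0"
  shows "((\<lambda>t. weak_Lp_norm (real DIM('a) / (real DIM('a) - \<alpha>)) (UNIV - ball 0 \<rho>)
            (\<lambda>x. frac_max \<alpha> (\<lambda>z. \<Phi> (norm z)) (dilate_measure t V) x
                 - (SUP r\<in>{0<..}. ereal (dil_kernel (\<lambda>z. \<Phi> (norm z)) \<alpha> r x))
                   * ereal (measure V UNIV)))
          \<longlongrightarrow> 0) (at_right 0)"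
proof -
  obtain R where "\<forall>s\<ge>R. \<Phi> s = 0" using Phi_supp by blast
  then interpret radial_profile \<Phi> "max R 1"
    using Phi_nonneg Phi_decr by unfold_locales auto
  show ?thesis
    by (intro tendsto_ennreal_0I eventually_weak_Lp_norm_deviation_less[unfolded deviation_def] V_fin V_borel alpha rho)
qed

end
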